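(* For every integer $n\geq 7$ there exist trees $T_1$ and $T_2$ on $n$ vertices such that $\psi(T_1)=\psi(T_2)$ but $T_1$ and $T_2$ are not isomorphic.
   Context: All graphs are finite, simple and nonempty. For a graph $G$ and a positive integer $k$, a $k$-path vertex cover ($k$-PVC) of $G$ is a set $S$ of vertices such that every path on $k$ vertices in $G$ contains at least one vertex of $S$ (if $G$ has no path on $k$ vertices, the empty set is a $k$-PVC). $\psi_k(G)$ denotes the minimum cardinality of a $k$-PVC of $G$. For a graph $G$ on $n$ vertices, the path sequence of $G$ is $\psi(G)=(\psi_1(G),\psi_2(G),\ldots,\psi_n(G))$. *)

theory Defs
  imports Main
begin

definition simple_graph :: "'a set \<Rightarrow> 'a set set \<Rightarrow> bool" where
  "simple_graph V E \<longleftrightarrow> finite V \<and> V \<noteq> {} \<and> (\<forall>e\<in>E. e \<subseteq> V \<and> card e = 2)"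

definition adj :: "'a set set \<Rightarrow> 'a \<Rightarrow> 'a \<Rightarrow> bool" where
  "adj E u v \<longleftrightarrow> {u, v} \<in> E"

text \<open>A path in G given by its vertex sequence: distinct vertices of V, consecutive ones adjacent.
  The number of vertices of the path is the length of the list.\<close>
definition is_path :: "'a set \<Rightarrow> 'a set set \<Rightarrow> 'a list \<Rightarrow> bool" where
  "is_path V E xs \<longleftrightarrow> xs \<noteq> [] \<and> distinct xs \<and> set xs \<subseteq> V \<and>
     (\<forall>i. Suc i < length xs \<longrightarrow> adj E (xs ! i) (xs ! Suc i))"

definition connected_graph :: "'a set \<Rightarrow> 'a set set \<Rightarrow> bool" where
  "connected_graph V E \<longleftrightarrow> (\<forall>u\<in>V. \<forall>v\<in>V. \<exists>xs. is_path V E xs \<and> hd xs = u \<and> last xs = v)"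

definition has_cycle :: "'a set \<Rightarrow> 'a set set \<Rightarrow> bool" where
  "has_cycle V E \<longleftrightarrow> (\<exists>xs. is_path V E xs \<and> length xs \<ge> 3 \<and> adj E (last xs) (hd xs))"

definition is_tree :: "'a set \<Rightarrow> 'a set set \<Rightarrow> bool" where
  "is_tree V E \<longleftrightarrow> simple_graph V E \<and> connected_graph V E \<and> \<not> has_cycle V E"

definition is_kPVC :: "'a set \<Rightarrow> 'a set set \<Rightarrow> nat \<Rightarrow> 'a set \<Rightarrow> bool" where
  "is_kPVC V E k S \<longleftrightarrow> S \<subseteq> V \<and>
     (\<forall>xs. is_path V E xs \<and> length xs = k \<longrightarrow> set xs \<inter> S \<noteq> {})"

definition psi :: "'a set \<Rightarrow> 'a set set \<Rightarrow> nat \<Rightarrow> nat" where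
  "psi V E k = Min {card S | S. is_kPVC V E k S}"

definition path_sequence :: "'a set \<Rightarrow> 'a set set \<Rightarrow> nat list" where
  "path_sequence V E = map (psi V E) [1..<card V + 1]"

definition graph_iso :: "'a set \<Rightarrow> 'a set set \<Rightarrow> 'b set \<Rightarrow> 'b set set \<Rightarrow> bool" where
  "graph_iso V1 E1 V2 E2 \<longleftrightarrow> (\<exists>f. bij_betw f V1 V2 \<and>
     (\<forall>u\<in>V1. \<forall>v\<in>V1. adj E1 u v \<longleftrightarrow> adj E2 (f u) (f v)))"

end

theory Submission
  imports Defs
begin

text \<open>Both trees are two stars, centred at 0 and 2, joined through the vertex 1: the broom has
  the leaves 4, ..., n-1 at 0 and the leaf 3 at 2, the double broom has the leaves 5, ..., n-1
  at 0 and the leaves 3, 4 at 2. In any such graph the two centres meet every edge, and two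
  disjoint paths on 3 vertices exist, so \<open>\<psi>\<^sub>2 = \<psi>\<^sub>3 = 2\<close>; every path on 4 vertices
  passes through the joint 1, and some path on 5 vertices exists, so \<open>\<psi>\<^sub>4 = \<psi>\<^sub>5 = 1\<close>; no
  path has 6 vertices. So the path sequences agree, whereas the root of the broom has degree
  n - 3 and every vertex of the double broom has degree at most n - 4.\<close>

lemma adj_commute: "adj E u v \<longleftrightarrow> adj E v u"
  by (simp add: adj_def insert_commute)

lemma is_path_iff_successively:
  "is_path V E xs \<longleftrightarrow> xs \<noteq> [] \<and> distinct xs \<and> set xs \<subseteq> V \<and> successively (adj E) xs"
  by (simp add: is_path_def successively_conv_nth)

lemma is_path_rev [simp]: "is_path V E (rev xs) \<longleftrightarrow> is_path V E xs"
  by (simp add: is_path_iff_successively adj_commute)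

section \<open>Walks, connectivity and acyclicity\<close>

definition walk :: "'a set \<Rightarrow> 'a set set \<Rightarrow> 'a list \<Rightarrow> bool" where
  "walk V E xs \<longleftrightarrow> xs \<noteq> [] \<and> set xs \<subseteq> V \<and> successively (adj E) xs"

lemma walk_join:
  assumes "walk V E xs" "walk V E ys" "last xs = hd ys"
  shows "walk V E (xs @ tl ys)"
proof -
  obtain xs' x where xs: "xs = xs' @ [x]" using assms(1) unfolding walk_def by (metis rev_exhaust)
  obtain ys' where ys: "ys = x # ys'" using assms(2,3) xs unfolding walk_def by (cases ys) auto
  show ?thesis using assms(1,2) unfolding walk_def xs ys
    by (auto simp: successively_append_iff)
qed

lemma walk_rev [simp]: "walk V E (rev xs) \<longleftrightarrow> walk V E xs"
  by (simp add: walk_def adj_commute)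

lemma walk_contains_path:
  assumes "walk V E xs"
  shows "\<exists>ys. is_path V E ys \<and> hd ys = hd xs \<and> last ys = last xs"
  using assms
proof (induction "length xs" arbitrary: xs rule: less_induct)
  case less
  show ?case
  proof (cases "distinct xs")
    case True
    then show ?thesis using less.prems by (auto simp: is_path_iff_successively walk_def)
  next
    case False
    then obtain as x bs cs where xs: "xs = as @ [x] @ bs @ [x] @ cs"
      using not_distinct_decomp by blast
    \<comment> \<open>cut out the closed subwalk between the two visits of x\<close>
    have "walk V E (as @ x # cs)"
      using less.prems successively_append_iff[of "adj E" "x # bs" "x # cs"]
      unfolding xs walk_def by (auto simp: successively_append_iff)
    moreover have "hd (as @ x # cs) = hd xs" "last (as @ x # cs) = last xs"
      unfolding xs by (cases as; simp) (cases cs; simp)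
    moreover have "length (as @ x # cs) < length xs" unfolding xs by simp
    ultimately show ?thesis using less.hyps by metis
  qed
qed

lemma connected_graph_if_walks_to_root:
  assumes "\<And>u. u \<in> V \<Longrightarrow> \<exists>xs. walk V E xs \<and> hd xs = u \<and> last xs = r"
  shows "connected_graph V E"
  unfolding connected_graph_def
proof (intro ballI)
  fix u v assume "u \<in> V" "v \<in> V"
  then obtain xs ys where xs: "walk V E xs" "hd xs = u" "last xs = r"
    and ys: "walk V E ys" "hd ys = v" "last ys = r"
    using assms by meson
  have "walk V E (xs @ tl (rev ys))"
    using xs ys by (intro walk_join) (auto simp: hd_rev)
  moreover have "hd (xs @ tl (rev ys)) = u"
    using xs by (simp add: walk_def)
  moreover have "last (xs @ tl (rev ys)) = v"
  proof (cases "tl (rev ys) = []")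
    case True
    then have "ys = [r]" using ys by (cases ys rule: rev_cases) (auto simp: walk_def)
    then show ?thesis using True xs ys by simp
  next
    case False
    then show ?thesis using ys by (simp add: last_tl last_rev)
  qed
  ultimately show "\<exists>zs. is_path V E zs \<and> hd zs = u \<and> last zs = v"
    using walk_contains_path by metis
qed

lemma not_has_cycle_if_unique_lower_neighbour:
  fixes V :: "'a::linorder set"
  assumes lower_unique: "\<And>u w v. adj E u v \<Longrightarrow> adj E w v \<Longrightarrow> u < v \<Longrightarrow> w < v \<Longrightarrow> u = w"
  shows "\<not> has_cycle V E"
proof
  assume "has_cycle V E"
  then obtain xs where path: "is_path V E xs" and len: "3 \<le> length xs"
    and closing: "adj E (last xs) (hd xs)"
    unfolding has_cycle_def by blast
  let ?L = "length xs"
  define succ where "succ i = (if i = ?L - 1 then 0 else Suc i)" for i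
  define pred where "pred i = (if i = 0 then ?L - 1 else i - 1)" for i
  have around: "adj E (xs ! i) (xs ! succ i)" if "i < ?L" for i
    using that path closing len
    by (cases "i = ?L - 1")
      (auto simp: succ_def is_path_def last_conv_nth hd_conv_nth)
  \<comment> \<open>the maximum of the cycle has two distinct lower neighbours on it\<close>
  obtain i where i: "i < ?L" "xs ! i = Max (set xs)"
    using path by (metis Max_in empty_iff finite_set in_set_conv_nth is_path_def set_empty)
  have below: "xs ! j < xs ! i" if "j < ?L" "j \<noteq> i" for j
  proof -
    have "xs ! j \<in> set xs" using that(1) by simp
    then have "xs ! j \<le> xs ! i" using i(2) by simp
    moreover have "xs ! j \<noteq> xs ! i"
      using that i(1) path by (simp add: is_path_def nth_eq_iff_index_eq)
    ultimately show ?thesis by simp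
  qed
  have indices: "pred i < ?L" "succ i < ?L" "pred i \<noteq> i" "succ i \<noteq> i" "pred i \<noteq> succ i"
    "succ (pred i) = i"
    using i(1) len by (auto simp: pred_def succ_def)
  have "adj E (xs ! pred i) (xs ! i)"
    using around[of "pred i"] indices by simp
  moreover have "adj E (xs ! succ i) (xs ! i)"
    using around[OF i(1)] adj_commute by metis
  ultimately have "xs ! pred i = xs ! succ i"
    using lower_unique below indices by metis
  then show False
    using path indices by (simp add: is_path_def nth_eq_iff_index_eq)
qed

lemma is_tree_if_unique_lower_neighbour:
  fixes E :: "nat set set"
  assumes "simple_graph {..<n} E"
    and lower_exists: "\<And>v. 0 < v \<Longrightarrow> v < n \<Longrightarrow> \<exists>u<v. adj E u v"
    and lower_unique: "\<And>u w v. adj E u v \<Longrightarrow> adj E w v \<Longrightarrow> u < v \<Longrightarrow> w < v \<Longrightarrow> u = w"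
  shows "is_tree {..<n} E"
proof -
  have "\<exists>xs. walk {..<n} E xs \<and> hd xs = v \<and> last xs = 0" if "v < n" for v
    using that
  proof (induction v rule: less_induct)
    case (less v)
    show ?case
    proof (cases "v = 0")
      case True
      then show ?thesis using less.prems by (intro exI[of _ "[0]"]) (simp add: walk_def)
    next
      case False
      then obtain u where "u < v" "adj E u v" using lower_exists less.prems by blast
      moreover obtain xs where "walk {..<n} E xs" "hd xs = u" "last xs = 0"
        using less.IH \<open>u < v\<close> less.prems by force
      ultimately show ?thesis using less.prems
        by (intro exI[of _ "v # xs"]) (cases xs; auto simp: walk_def adj_commute)
    qed
  qed
  then have "connected_graph {..<n} E"
    by (intro connected_graph_if_walks_to_root) blast
  moreover have "\<not> has_cycle {..<n} E"
    using lower_unique by (rule not_has_cycle_if_unique_lower_neighbour)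
  ultimately show ?thesis
    using assms(1) by (simp add: is_tree_def)
qed

lemma is_kPVC_vertex_set: "is_kPVC V E k V"
  unfolding is_kPVC_def is_path_def by (auto simp: Int_absorb2)

lemma is_kPVC_finite: "finite V \<Longrightarrow> is_kPVC V E k S \<Longrightarrow> finite S"
  unfolding is_kPVC_def using finite_subset by blast

lemma finite_kPVC_cards:
  assumes "finite V"
  shows "finite {card S | S. is_kPVC V E k S}"
proof (rule finite_subset)
  show "{card S | S. is_kPVC V E k S} \<subseteq> {..card V}"
    using assms card_mono unfolding is_kPVC_def by fastforce
qed simp

lemma psi_le_card: "finite V \<Longrightarrow> is_kPVC V E k S \<Longrightarrow> psi V E k \<le> card S"
  unfolding psi_def by (rule Min_le) (blast intro: finite_kPVC_cards)+

lemma psi_attained: "finite V \<Longrightarrow> \<exists>S. is_kPVC V E k S \<and> card S = psi V E k"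
proof -
  assume "finite V"
  then have "psi V E k \<in> {card S | S. is_kPVC V E k S}"
    unfolding psi_def using is_kPVC_vertex_set by (intro Min_in finite_kPVC_cards) blast+
  then show ?thesis by force
qed

lemma psi_one: "finite V \<Longrightarrow> psi V E 1 = card V"
proof -
  assume "finite V"
  then obtain S where S: "is_kPVC V E 1 S" "card S = psi V E 1"
    using psi_attained by blast
  have "v \<in> S" if "v \<in> V" for v
  proof -
    have "is_path V E [v]" using that by (simp add: is_path_def)
    then have "set [v] \<inter> S \<noteq> {}" using S(1) unfolding is_kPVC_def by force
    then show ?thesis by simp
  qed
  then have "S = V" using S(1) unfolding is_kPVC_def by blast
  then show ?thesis using S(2) by simp
qed

lemma card_le_psi_if_disjoint_paths:
  assumes "finite V"
    and paths: "\<And>p. p \<in> P \<Longrightarrow> is_path V E p \<and> length p = k"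
    and disjoint: "pairwise (\<lambda>p q. disjnt (set p) (set q)) P"
  shows "card P \<le> psi V E k"
proof -
  obtain S where S: "is_kPVC V E k S" "card S = psi V E k"
    using psi_attained[OF \<open>finite V\<close>] by blast
  define hit where "hit p = (SOME x. x \<in> set p \<inter> S)" for p
  have hit: "hit p \<in> set p \<inter> S" if "p \<in> P" for p
  proof -
    have "set p \<inter> S \<noteq> {}" using S(1) paths[OF that] unfolding is_kPVC_def by blast
    then show ?thesis unfolding hit_def by (meson ex_in_conv someI_ex)
  qed
  have "inj_on hit P"
  proof (rule inj_onI)
    fix p q assume "p \<in> P" "q \<in> P" "hit p = hit q"
    then have "\<not> disjnt (set p) (set q)" using hit by (metis IntD1 disjnt_iff)
    then show "p = q" using disjoint \<open>p \<in> P\<close> \<open>q \<in> P\<close> by (meson pairwiseD)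
  qed
  moreover have "hit ` P \<subseteq> S" using hit by blast
  ultimately have "card P \<le> card S"
    using is_kPVC_finite[OF \<open>finite V\<close> S(1)] by (intro card_inj_on_le)
  then show ?thesis using S(2) by simp
qed

section \<open>Two stars joined through a middle vertex\<close>

text \<open>Deleting \<open>m\<close> leaves a disjoint union of stars whose centres lie in \<open>C\<close>, and \<open>m\<close> is
  adjacent to centres only.\<close>

locale stars_joined =
  fixes E :: "'a set set" and C :: "'a set" and m :: 'a
  assumes middle_notin_centres: "m \<notin> C"
    and adj_middle: "adj E m v \<Longrightarrow> v \<in> C"
    and adj_centre_iff: "adj E u v \<Longrightarrow> u \<noteq> m \<Longrightarrow> v \<noteq> m \<Longrightarrow> u \<in> C \<longleftrightarrow> v \<notin> C"
    and unique_centre: "adj E u y \<Longrightarrow> adj E w y \<Longrightarrow> u \<in> C \<Longrightarrow> w \<in> C \<Longrightarrow> y \<noteq> m \<Longrightarrow> u = w"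
begin

lemma edge_meets_centres: "adj E u v \<Longrightarrow> u \<in> C \<or> v \<in> C"
  using adj_middle adj_centre_iff adj_commute by metis

lemma walk_from_centre_returns:
  assumes "adj E x y" "adj E y z" "x \<in> C" "y \<noteq> m" "z \<noteq> m"
  shows "z = x"
proof -
  have "y \<notin> C" using adj_centre_iff[OF assms(1)] assms(3,4) middle_notin_centres by blast
  then have "z \<in> C" using adj_centre_iff[OF assms(2) assms(4,5)] by blast
  then show ?thesis using unique_centre assms(1,2,3,4) adj_commute by metis
qed

lemma length_path_avoiding_middle:
  assumes "is_path V E xs" "m \<notin> set xs"
  shows "length xs \<le> 3"
proof (rule ccontr)
  assume "\<not> length xs \<le> 3"
  then obtain w x y z rest where xs: "xs = w # x # y # z # rest"
    by (auto simp: Suc_le_length_iff numeral_eq_Suc not_le Suc_le_eq[symmetric])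
  have adjs: "adj E w x" "adj E x y" "adj E y z" and "w \<noteq> y" "x \<noteq> z"
    and "w \<noteq> m" "x \<noteq> m" "y \<noteq> m" "z \<noteq> m"
    using assms unfolding xs is_path_iff_successively by auto
  then show False
    using walk_from_centre_returns edge_meets_centres[OF adjs(1)] by metis
qed

lemma length_beyond_middle:
  assumes "is_path V E (as @ m # bs)"
  shows "length bs \<le> 2"
proof (rule ccontr)
  assume "\<not> length bs \<le> 2"
  then obtain x y z rest where bs: "bs = x # y # z # rest"
    by (auto simp: Suc_le_length_iff numeral_eq_Suc not_le Suc_le_eq[symmetric])
  have "adj E m x" "adj E x y" "adj E y z" "x \<noteq> z" "y \<noteq> m" "z \<noteq> m"
    using assms unfolding bs is_path_iff_successively by (auto simp: successively_append_iff)
  then show False using walk_from_centre_returns adj_middle by metis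
qed

lemma length_path: "is_path V E xs \<Longrightarrow> length xs \<le> 5"
proof (cases "m \<in> set xs")
  case True
  then obtain as bs where xs: "xs = as @ m # bs" by (meson split_list)
  moreover assume path: "is_path V E xs"
  moreover have "is_path V E (rev bs @ m # rev as)"
    using path is_path_rev[of V E xs] unfolding xs by simp
  ultimately have "length bs \<le> 2" "length (rev as) \<le> 2"
    using length_beyond_middle by blast+
  then show ?thesis unfolding xs by simp
qed (use length_path_avoiding_middle in fastforce)

lemma psi_le_card_centres:
  assumes "finite V" "C \<subseteq> V" "2 \<le> k"
  shows "psi V E k \<le> card C"
proof (rule psi_le_card[OF assms(1)])
  have "set xs \<inter> C \<noteq> {}" if path: "is_path V E xs" and len: "length xs = k" for xs
  proof -
    obtain x y rest where "xs = x # y # rest"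
      using len assms(3) by (auto simp: Suc_le_length_iff numeral_eq_Suc)
    then show ?thesis using path edge_meets_centres by (auto simp: is_path_iff_successively)
  qed
  then show "is_kPVC V E k C" using assms(2) by (simp add: is_kPVC_def)
qed

lemma psi_le_one:
  assumes "finite V" "m \<in> V" "4 \<le> k"
  shows "psi V E k \<le> 1"
proof -
  have "is_kPVC V E k {m}"
    using assms(2,3) length_path_avoiding_middle by (fastforce simp: is_kPVC_def)
  then show ?thesis using psi_le_card[OF assms(1)] by fastforce
qed

lemma psi_eq_zero:
  assumes "finite V" "6 \<le> k"
  shows "psi V E k = 0"
proof -
  have "is_kPVC V E k {}"
    using assms(2) length_path by (fastforce simp: is_kPVC_def)
  then show ?thesis using psi_le_card[OF assms(1)] by fastforce
qed

end

lemma psi_stars_joined: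
  fixes E :: "nat set set"
  assumes "stars_joined E {0, 2} 1" and "7 \<le> n" and "1 \<le> k"
    and edges: "adj E 0 1" "adj E 1 2" "adj E 2 3" "adj E 0 5" "adj E 0 6"
  shows "psi {..<n} E k = (if k = 1 then n else if k \<le> 3 then 2 else if k \<le> 5 then 1 else 0)"
proof -
  interpret stars_joined E "{0, 2}" 1 by fact
  have fin: "finite {..<n}" by simp
  have sub: "{0, 2} \<subseteq> {..<n}" "(1::nat) \<in> {..<n}" using \<open>7 \<le> n\<close> by auto
  have rev_edges: "adj E 1 0" "adj E 2 1" "adj E 5 0" using edges adj_commute by metis+
  have paths: "is_path {..<n} E [5, 0]" "is_path {..<n} E [2, 3]"
    "is_path {..<n} E [5, 0, 6]" "is_path {..<n} E [1, 2, 3]"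
    "is_path {..<n} E [5, 0, 1, 2]" "is_path {..<n} E [5, 0, 1, 2, 3]"
    using \<open>7 \<le> n\<close> edges rev_edges by (simp_all add: is_path_iff_successively)
  consider "k = 1" | "k = 2" | "k = 3" | "k = 4" | "k = 5" | "6 \<le> k" using \<open>1 \<le> k\<close> by linarith
  then show ?thesis
  proof cases
    case 1
    then show ?thesis using psi_one[OF fin] by simp
  next
    case 2
    have "card {[5, 0], [2, 3 :: nat]} \<le> psi {..<n} E k"
      using 2 paths by (intro card_le_psi_if_disjoint_paths) (auto simp: pairwise_insert)
    then show ?thesis using 2 psi_le_card_centres[OF fin sub(1), of k] by auto
  next
    case 3
    have "card {[5, 0, 6], [1, 2, 3 :: nat]} \<le> psi {..<n} E k"
      using 3 paths by (intro card_le_psi_if_disjoint_paths) (auto simp: pairwise_insert)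
    then show ?thesis using 3 psi_le_card_centres[OF fin sub(1), of k] by auto
  next
    case 4
    have "card {[5, 0, 1, 2 :: nat]} \<le> psi {..<n} E k"
      using 4 paths by (intro card_le_psi_if_disjoint_paths) auto
    then show ?thesis using 4 psi_le_one[OF fin sub(2), of k] by auto
  next
    case 5
    have "card {[5, 0, 1, 2, 3 :: nat]} \<le> psi {..<n} E k"
      using 5 paths by (intro card_le_psi_if_disjoint_paths) auto
    then show ?thesis using 5 psi_le_one[OF fin sub(2), of k] by auto
  next
    case 6
    then show ?thesis using psi_eq_zero[OF fin] by simp
  qed
qed

definition degree :: "'a set \<Rightarrow> 'a set set \<Rightarrow> 'a \<Rightarrow> nat" where
  "degree V E v = card {w \<in> V. adj E v w}"

lemma graph_iso_degree:
  assumes "graph_iso V1 E1 V2 E2" "v \<in> V1"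
  shows "\<exists>w\<in>V2. degree V2 E2 w = degree V1 E1 v"
proof -
  obtain f where bij: "bij_betw f V1 V2"
    and adj: "\<forall>u\<in>V1. \<forall>w\<in>V1. adj E1 u w \<longleftrightarrow> adj E2 (f u) (f w)"
    using assms(1) unfolding graph_iso_def by blast
  have "f ` {w \<in> V1. adj E1 v w} = {w \<in> V2. adj E2 (f v) w}"
    using bij adj assms(2) by (auto simp: bij_betw_def)
  moreover have "inj_on f {w \<in> V1. adj E1 v w}"
    using bij by (auto simp: bij_betw_def intro: inj_on_subset)
  ultimately have "degree V2 E2 (f v) = degree V1 E1 v"
    unfolding degree_def by (metis card_image)
  then show ?thesis using bij assms(2) by (auto simp: bij_betw_def)
qed

section \<open>The two trees\<close>

definition broom :: "nat \<Rightarrow> nat set set" where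
  "broom n = {{0, 1}, {1, 2}, {2, 3}} \<union> {{0, v} | v. 4 \<le> v \<and> v < n}"

definition double_broom :: "nat \<Rightarrow> nat set set" where
  "double_broom n = {{0, 1}, {1, 2}, {2, 3}, {2, 4}} \<union> {{0, v} | v. 5 \<le> v \<and> v < n}"

lemma adj_broom_iff:
  "adj (broom n) u v \<longleftrightarrow>
     (u = 0 \<and> v = 1) \<or> (u = 1 \<and> v = 0) \<or> (u = 1 \<and> v = 2) \<or> (u = 2 \<and> v = 1) \<or>
     (u = 2 \<and> v = 3) \<or> (u = 3 \<and> v = 2) \<or> (u = 0 \<and> 4 \<le> v \<and> v < n) \<or> (v = 0 \<and> 4 \<le> u \<and> u < n)"
  unfolding adj_def broom_def by (auto simp: doubleton_eq_iff)

lemma adj_double_broom_iff: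
  "adj (double_broom n) u v \<longleftrightarrow>
     (u = 0 \<and> v = 1) \<or> (u = 1 \<and> v = 0) \<or> (u = 1 \<and> v = 2) \<or> (u = 2 \<and> v = 1) \<or>
     (u = 2 \<and> v = 3) \<or> (u = 3 \<and> v = 2) \<or> (u = 2 \<and> v = 4) \<or> (u = 4 \<and> v = 2) \<or>
     (u = 0 \<and> 5 \<le> v \<and> v < n) \<or> (v = 0 \<and> 5 \<le> u \<and> u < n)"
  unfolding adj_def double_broom_def by (auto simp: doubleton_eq_iff)

lemma is_tree_broom: "4 \<le> n \<Longrightarrow> is_tree {..<n} (broom n)"
proof (rule is_tree_if_unique_lower_neighbour)
  show "simple_graph {..<n} (broom n)" if "4 \<le> n"
    using that unfolding simple_graph_def broom_def by (auto simp: lessThan_empty_iff)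
  show "\<exists>u<v. adj (broom n) u v" if "0 < v" "v < n" for v
    using that by (intro exI[of _ "if v \<le> 3 then v - 1 else 0"]) (auto simp: adj_broom_iff)
qed (auto simp: adj_broom_iff)

lemma is_tree_double_broom: "5 \<le> n \<Longrightarrow> is_tree {..<n} (double_broom n)"
proof (rule is_tree_if_unique_lower_neighbour)
  show "simple_graph {..<n} (double_broom n)" if "5 \<le> n"
    using that unfolding simple_graph_def double_broom_def by (auto simp: lessThan_empty_iff)
  show "\<exists>u<v. adj (double_broom n) u v" if "0 < v" "v < n" for v
    using that
    by (intro exI[of _ "if v \<le> 3 then v - 1 else if v = 4 then 2 else 0"])
      (auto simp: adj_double_broom_iff)
qed (auto simp: adj_double_broom_iff)

lemma stars_joined_broom: "stars_joined (broom n) {0, 2} 1"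
  by (unfold_locales; (unfold adj_broom_iff)?; (elim disjE conjE)?; simp)

lemma stars_joined_double_broom: "stars_joined (double_broom n) {0, 2} 1"
  by (unfold_locales; (unfold adj_double_broom_iff)?; (elim disjE conjE)?; simp)


lemma psi_broom:
  "7 \<le> n \<Longrightarrow> 1 \<le> k \<Longrightarrow>
     psi {..<n} (broom n) k = (if k = 1 then n else if k \<le> 3 then 2 else if k \<le> 5 then 1 else 0)"
  by (rule psi_stars_joined[OF stars_joined_broom]) (simp_all add: adj_broom_iff)

lemma psi_double_broom:
  "7 \<le> n \<Longrightarrow> 1 \<le> k \<Longrightarrow>
     psi {..<n} (double_broom n) k = (if k = 1 then n else if k \<le> 3 then 2 else if k \<le> 5 then 1 else 0)"
  by (rule psi_stars_joined[OF stars_joined_double_broom]) (simp_all add: adj_double_broom_iff)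

lemma degree_broom_root: "4 \<le> n \<Longrightarrow> degree {..<n} (broom n) 0 = n - 3"
proof -
  assume "4 \<le> n"
  then have "{w \<in> {..<n}. adj (broom n) 0 w} = insert 1 {4..<n}"
    by (auto simp: adj_broom_iff)
  then show ?thesis using \<open>4 \<le> n\<close> by (simp add: degree_def)
qed

lemma degree_double_broom_le:
  assumes "7 \<le> n"
  shows "degree {..<n} (double_broom n) v \<le> n - 4"
proof -
  have "{w \<in> {..<n}. adj (double_broom n) v w} \<subseteq>
      (if v = 0 then insert 1 {5..<n} else if v = 2 then {1, 3, 4} else {0, 2})"
    by (auto simp: adj_double_broom_iff)
  then have "degree {..<n} (double_broom n) v \<le>
      card (if v = 0 then insert 1 {5..<n} else if v = 2 then {1, 3, 4 :: nat} else {0, 2})"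
    unfolding degree_def by (intro card_mono) auto
  also have "\<dots> \<le> n - 4" using assms by (auto simp: card_insert_if)
  finally show ?thesis .
qed

lemma not_graph_iso_broom_double_broom:
  assumes "7 \<le> n"
  shows "\<not> graph_iso {..<n} (broom n) {..<n} (double_broom n)"
proof
  assume "graph_iso {..<n} (broom n) {..<n} (double_broom n)"
  then obtain w where "degree {..<n} (double_broom n) w = n - 3"
    using graph_iso_degree[of _ _ _ _ 0] degree_broom_root assms by fastforce
  then show False using degree_double_broom_le[OF assms, of w] assms by simp
qed

theorem mainTheorem8:
  fixes n :: nat
  assumes "n \<ge> 7"
  shows "\<exists>E1 E2 :: nat set set.
           is_tree {..<n} E1 \<and> is_tree {..<n} E2 \<and>
           path_sequence {..<n} E1 = path_sequence {..<n} E2 \<and>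
           \<not> graph_iso {..<n} E1 {..<n} E2"
proof (intro exI conjI)
  show "is_tree {..<n} (broom n)" "is_tree {..<n} (double_broom n)"
    using assms by (simp_all add: is_tree_broom is_tree_double_broom)
  show "path_sequence {..<n} (broom n) = path_sequence {..<n} (double_broom n)"
    using assms by (auto simp: path_sequence_def psi_broom psi_double_broom)
  show "\<not> graph_iso {..<n} (broom n) {..<n} (double_broom n)"
    using assms by (rule not_graph_iso_broom_double_broom)
qed

end
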